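(* Let $\sigma:\mathbb{R}\to\mathbb{R}$ be a continuous discriminatory function and $n\ge1$. For every continuous function $f:[0,1]^n\to\mathbb{R}$ and every $\epsilon>0$ there exist a positive integer $k$, a matrix $\mathbf{W}=[\mathbf{w}_1|\cdots|\mathbf{w}_{kn}]=[\mathbf{W}_1|\cdots|\mathbf{W}_k]\in\mathbb{R}^{n\times kn}$ in which every $n\times n$ block $\mathbf{W}_i$ is a Toeplitz matrix, and real numbers $\alpha_j,\theta_j$ ($j=1,\dots,kn$) such that $G(\mathbf{x})=\sum_{j=1}^{kn}\alpha_j\sigma(\mathbf{w}_j^T\mathbf{x}+\theta_j)$ satisfies $\max_{\mathbf{x}\in[0,1]^n}|G(\mathbf{x})-f(\mathbf{x})|<\epsilon$. The same holds with "Toeplitz" replaced by "circulant".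
   Context: A function $\sigma:\mathbb{R}\to\mathbb{R}$ is discriminatory if the zero measure is the only finite signed regular Borel measure $\mu$ on $[0,1]^n$ with $\int_{[0,1]^n}\sigma(\mathbf{w}^T\mathbf{x}+\theta)\,d\mu(\mathbf{x})=0$ for all $\mathbf{w}\in\mathbb{R}^n,\theta\in\mathbb{R}$. A Toeplitz matrix is one with constant diagonals ($M_{ij}$ depends only on $i-j$); a circulant matrix is one where $M_{ij}$ depends only on $(i-j)\bmod n$. $\mathbf{w}_j$ is the $j$-th column of $\mathbf{W}$. *)

theory Defs
  imports "HOL-Analysis.Analysis"
begin

definition unit_cube :: "(real^'n::finite) set" where
  "unit_cube = cbox 0 1"

text \<open>A finite signed Borel measure on the cube is represented by its Jordan
decomposition mu = M1 - M2 with M1, M2 finite (positive) Borel measures on the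
cube (on a compact metric space every finite Borel measure is regular).
sigma is discriminatory iff mu = 0 is the only such measure annihilating all
ridge functions sigma(w.x + theta).\<close>
definition discriminatory :: "(real \<Rightarrow> real) \<Rightarrow> ('n::finite) itself \<Rightarrow> bool" where
  "discriminatory \<sigma> _ \<longleftrightarrow>
    (\<forall>(M1::(real^'n) measure) (M2::(real^'n) measure).
       sets M1 = sets (restrict_space borel unit_cube) \<and>
       sets M2 = sets (restrict_space borel unit_cube) \<and>
       finite_measure M1 \<and> finite_measure M2 \<and>
       (\<forall>(w::real^'n) (\<theta>::real).
          (\<integral>x. \<sigma> (w \<bullet> x + \<theta>) \<partial>M1) = (\<integral>x. \<sigma> (w \<bullet> x + \<theta>) \<partial>M2))
       \<longrightarrow> (\<forall>A\<in>sets M1. measure M1 A = measure M2 A))"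

text \<open>Position (0-based) of an index in the linear order of the index type;
this identifies 'n with {0,...,n-1}.\<close>
definition idx_pos :: "'n::{finite,linorder} \<Rightarrow> int" where
  "idx_pos i = int (card {j. j < i})"

definition toeplitz :: "real^('n::{finite,linorder})^('n::{finite,linorder}) \<Rightarrow> bool" where
  "toeplitz M \<longleftrightarrow> (\<forall>i j i' j'. idx_pos i - idx_pos j = idx_pos i' - idx_pos j'
                        \<longrightarrow> M $ i $ j = M $ i' $ j')"

definition circulant :: "real^('n::{finite,linorder})^('n::{finite,linorder}) \<Rightarrow> bool" where
  "circulant M \<longleftrightarrow> (\<forall>i j i' j'.
      (idx_pos i - idx_pos j) mod int CARD('n) = (idx_pos i' - idx_pos j') mod int CARD('n)
      \<longrightarrow> M $ i $ j = M $ i' $ j')"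

text \<open>The network with blocks W 0,...,W (k-1); column c of block i is w_j.\<close>
definition block_net ::
  "(real \<Rightarrow> real) \<Rightarrow> nat \<Rightarrow> (nat \<Rightarrow> real^'n^'n) \<Rightarrow> (nat \<Rightarrow> 'n \<Rightarrow> real)
     \<Rightarrow> (nat \<Rightarrow> 'n \<Rightarrow> real) \<Rightarrow> real^'n::finite \<Rightarrow> real" where
  "block_net \<sigma> k W \<alpha> \<theta> x =
     (\<Sum>i<k. \<Sum>c\<in>UNIV. \<alpha> i c * \<sigma> (column c (W i) \<bullet> x + \<theta> i c))"

end

theory Submission
  imports Defs
begin

(*
  If some forward difference \<Delta>_h^k \<sigma> vanished identically, the unit point masses at the
  points (|S|/k) e, for S ranging over the subsets of {0..k-1} of even resp. odd co-size, would
  form two different finite measures on the cube with the same integral against every ridge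
  function \<sigma>(w \<bullet> x + \<theta>). So a discriminatory \<sigma> has no identically vanishing forward difference.

  Then t^k \<Delta>_h^k \<sigma>(a t + b) is a uniform limit of one-dimensional ridge sums on every interval,
  by induction on k: \<Delta>_h^(k+1) \<sigma> is the derivative of F(s + h) - F(s) for an antiderivative F
  of \<Delta>_h^k \<sigma>, this increment is a limit of Riemann sums of shifts of \<Delta>_h^k \<sigma>, and differentiating
  in the slope a contributes the factor t. Hence all monomials, and by Weierstrass all continuous
  functions of one variable, are limits of ridge sums; in particular every exp (w \<bullet> x), and the
  exponential sums are dense on the cube by Stone-Weierstrass.

  A ridge network is a block network whose circulant blocks carry the weight vectors as first
  column, all other columns getting output weight 0; circulant matrices are Toeplitz.
*)

section \<open>One-dimensional ridge sums\<close>

definition ridge_sum :: "(real \<Rightarrow> real) \<Rightarrow> (real \<times> real \<times> real) list \<Rightarrow> real \<Rightarrow> real" where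
  "ridge_sum \<sigma> L t = (\<Sum>(\<alpha>, a, b)\<leftarrow>L. \<alpha> * \<sigma> (a * t + b))"

definition ridge_approximable :: "(real \<Rightarrow> real) \<Rightarrow> real \<Rightarrow> real \<Rightarrow> (real \<Rightarrow> real) \<Rightarrow> bool" where
  "ridge_approximable \<sigma> c d g \<longleftrightarrow> (\<forall>e>0. \<exists>L. \<forall>t\<in>{c..d}. \<bar>g t - ridge_sum \<sigma> L t\<bar> < e)"

lemma ridge_sum_append: "ridge_sum \<sigma> (L1 @ L2) t = ridge_sum \<sigma> L1 t + ridge_sum \<sigma> L2 t"
  by (simp add: ridge_sum_def)

lemma ridge_sum_scale: "ridge_sum \<sigma> (map (\<lambda>(\<alpha>, p). (k * \<alpha>, p)) L) t = k * ridge_sum \<sigma> L t"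
  by (induction L) (auto simp: ridge_sum_def algebra_simps)

lemma ridge_approximable_unit: "ridge_approximable \<sigma> c d (\<lambda>t. \<sigma> (a * t + b))"
  unfolding ridge_approximable_def by (intro allI impI exI[of _ "[(1, a, b)]"]) (simp add: ridge_sum_def)

lemma ridge_approximable_zero: "ridge_approximable \<sigma> c d (\<lambda>t. 0)"
  unfolding ridge_approximable_def by (intro allI impI exI[of _ "[]"]) (simp add: ridge_sum_def)

lemma ridge_approximable_add:
  assumes "ridge_approximable \<sigma> c d f" "ridge_approximable \<sigma> c d g"
  shows "ridge_approximable \<sigma> c d (\<lambda>t. f t + g t)"
  unfolding ridge_approximable_def
proof (intro allI impI)
  fix e :: real assume "e > 0"
  then obtain L1 L2 where
    L1: "\<forall>t\<in>{c..d}. \<bar>f t - ridge_sum \<sigma> L1 t\<bar> < e/2" and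
    L2: "\<forall>t\<in>{c..d}. \<bar>g t - ridge_sum \<sigma> L2 t\<bar> < e/2"
    using assms unfolding ridge_approximable_def by (meson half_gt_zero)
  have "\<bar>f t + g t - ridge_sum \<sigma> (L1 @ L2) t\<bar> < e" if "t \<in> {c..d}" for t
    using L1[rule_format, OF that] L2[rule_format, OF that] unfolding ridge_sum_append by arith
  then show "\<exists>L. \<forall>t\<in>{c..d}. \<bar>f t + g t - ridge_sum \<sigma> L t\<bar> < e" by blast
qed

lemma ridge_approximable_cmult:
  assumes "ridge_approximable \<sigma> c d f"
  shows "ridge_approximable \<sigma> c d (\<lambda>t. k * f t)"
  unfolding ridge_approximable_def
proof (intro allI impI)
  fix e :: real assume "e > 0"
  then obtain L where L: "\<forall>t\<in>{c..d}. \<bar>f t - ridge_sum \<sigma> L t\<bar> < e / (\<bar>k\<bar> + 1)"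
    using assms unfolding ridge_approximable_def by (meson divide_pos_pos abs_ge_zero add_nonneg_pos zero_less_one)
  let ?L = "map (\<lambda>(\<alpha>, p). (k * \<alpha>, p)) L"
  have "\<bar>k * f t - ridge_sum \<sigma> ?L t\<bar> < e" if t: "t \<in> {c..d}" for t
  proof -
    have "\<bar>k * f t - ridge_sum \<sigma> ?L t\<bar> = \<bar>k\<bar> * \<bar>f t - ridge_sum \<sigma> L t\<bar>"
      by (simp add: ridge_sum_scale abs_mult[symmetric] right_diff_distrib)
    also have "\<dots> \<le> (\<bar>k\<bar> + 1) * \<bar>f t - ridge_sum \<sigma> L t\<bar>" by (simp add: mult_right_mono)
    also have "\<dots> < (\<bar>k\<bar> + 1) * (e / (\<bar>k\<bar> + 1))"
      using L t by (intro mult_strict_left_mono) auto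
    finally show ?thesis by simp
  qed
  then show "\<exists>L. \<forall>t\<in>{c..d}. \<bar>k * f t - ridge_sum \<sigma> L t\<bar> < e" by blast
qed

lemma ridge_approximable_sum:
  fixes N :: nat
  assumes "\<And>i. i < N \<Longrightarrow> ridge_approximable \<sigma> c d (f i)"
  shows "ridge_approximable \<sigma> c d (\<lambda>t. \<Sum>i<N. f i t)"
  using assms by (induction N) (simp_all add: ridge_approximable_zero ridge_approximable_add)

lemma ridge_approximable_cong:
  assumes "ridge_approximable \<sigma> c d f" "\<And>t. t \<in> {c..d} \<Longrightarrow> f t = g t"
  shows "ridge_approximable \<sigma> c d g"
  using assms unfolding ridge_approximable_def by simp

lemma ridge_approximable_uniform_limit:
  assumes "\<And>e. e > 0 \<Longrightarrow> \<exists>h. ridge_approximable \<sigma> c d h \<and> (\<forall>t\<in>{c..d}. \<bar>g t - h t\<bar> \<le> e)"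
  shows "ridge_approximable \<sigma> c d g"
  unfolding ridge_approximable_def
proof (intro allI impI)
  fix e :: real assume "e > 0"
  then obtain h where h: "ridge_approximable \<sigma> c d h" "\<forall>t\<in>{c..d}. \<bar>g t - h t\<bar> \<le> e/2"
    using assms[of "e/2"] by auto
  obtain L where L: "\<forall>t\<in>{c..d}. \<bar>h t - ridge_sum \<sigma> L t\<bar> < e/2"
    using h(1) \<open>e > 0\<close> unfolding ridge_approximable_def by (meson half_gt_zero)
  have "\<bar>g t - ridge_sum \<sigma> L t\<bar> < e" if "t \<in> {c..d}" for t
    using h(2)[rule_format, OF that] L[rule_format, OF that] by arith
  then show "\<exists>L. \<forall>t\<in>{c..d}. \<bar>g t - ridge_sum \<sigma> L t\<bar> < e" by blast
qed

section \<open>Linearization and Riemann sums\<close>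

lemma has_real_derivative_linearization_bound:
  fixes F f :: "real \<Rightarrow> real"
  assumes der: "\<And>z. (F has_real_derivative f z) (at z)"
    and bnd: "\<And>z. z \<in> closed_segment x y \<Longrightarrow> \<bar>f z - f x\<bar> \<le> \<eta>"
  shows "\<bar>F y - F x - (y - x) * f x\<bar> \<le> \<eta> * \<bar>y - x\<bar>"
proof -
  define G where "G z = F z - z * f x" for z
  have "(G has_field_derivative (f z - f x)) (at z within closed_segment x y)" for z
  proof -
    have "(G has_real_derivative (f z - 1 * f x)) (at z)"
      unfolding G_def by (rule DERIV_diff[OF der DERIV_cmult_right[OF DERIV_ident]])
    then show ?thesis by (simp add: has_field_derivative_at_within)
  qed
  then have "norm (G y - G x) \<le> \<eta> * norm (y - x)"
    by (rule field_differentiable_bound[OF convex_closed_segment]) (use bnd in auto)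
  then show ?thesis unfolding G_def by (simp add: algebra_simps)
qed

lemma uniform_linearization:
  fixes F f :: "real \<Rightarrow> real"
  assumes der: "\<And>z. (F has_real_derivative f z) (at z)"
    and cont: "continuous_on UNIV f" and "\<eta> > 0"
  obtains \<rho> where "\<rho> > 0"
    "\<And>x y. \<bar>x\<bar> \<le> R \<Longrightarrow> \<bar>y\<bar> \<le> R \<Longrightarrow> \<bar>y - x\<bar> \<le> \<rho> \<Longrightarrow>
       \<bar>F y - F x - (y - x) * f x\<bar> \<le> \<eta> * \<bar>y - x\<bar>"
proof -
  have "uniformly_continuous_on {-R..R} f"
    by (rule compact_uniformly_continuous) (auto intro: continuous_on_subset[OF cont])
  then obtain d where d: "d > 0"
    "\<And>x z. x \<in> {-R..R} \<Longrightarrow> z \<in> {-R..R} \<Longrightarrow> dist z x < d \<Longrightarrow> dist (f z) (f x) < \<eta>"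
    using \<open>\<eta> > 0\<close> unfolding uniformly_continuous_on_def by metis
  show ?thesis
  proof (rule that[of "d/2"])
    fix x y :: real assume xy: "\<bar>x\<bar> \<le> R" "\<bar>y\<bar> \<le> R" "\<bar>y - x\<bar> \<le> d/2"
    show "\<bar>F y - F x - (y - x) * f x\<bar> \<le> \<eta> * \<bar>y - x\<bar>"
    proof (rule has_real_derivative_linearization_bound[OF der])
      fix z assume z: "z \<in> closed_segment x y"
      have "closed_segment x y \<subseteq> {-R..R}"
        using xy by (intro closed_segment_subset) auto
      moreover have "\<bar>z - x\<bar> \<le> \<bar>y - x\<bar>"
        using dist_in_closed_segment[OF z] by (simp add: dist_real_def abs_minus_commute)
      then have "dist z x < d"
        using xy d(1) by (simp add: dist_real_def)
      ultimately have "dist (f z) (f x) < \<eta>"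
        using z xy by (intro d(2)) auto
      then show "\<bar>f z - f x\<bar> \<le> \<eta>" by (simp add: dist_real_def)
    qed
  qed (use d in simp)
qed

lemma riemann_sum_increment_bound:
  fixes F f :: "real \<Rightarrow> real" and N :: nat and h s R \<delta> \<eta> :: real
  assumes lin: "\<And>x y. \<bar>x\<bar> \<le> R \<Longrightarrow> \<bar>y\<bar> \<le> R \<Longrightarrow> \<bar>y - x\<bar> \<le> \<delta> \<Longrightarrow>
                    \<bar>F y - F x - (y - x) * f x\<bar> \<le> \<eta> * \<bar>y - x\<bar>"
    and "N > 0" and "\<bar>h\<bar> \<le> N * \<delta>" and s: "\<bar>s\<bar> + \<bar>h\<bar> \<le> R"
  shows "\<bar>F (s + h) - F s - (\<Sum>i<N. (h/N) * f (s + i * (h/N)))\<bar> \<le> \<eta> * \<bar>h\<bar>"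
proof -
  define q where "q = h / N"
  have Nq: "N * \<bar>q\<bar> = \<bar>h\<bar>" using \<open>N > 0\<close> by (simp add: q_def)
  have "\<bar>q\<bar> \<le> \<delta>" using assms(3) \<open>N > 0\<close> by (simp add: q_def field_simps)
  have step: "\<bar>F (s + Suc i * q) - F (s + i * q) - q * f (s + i * q)\<bar> \<le> \<eta> * \<bar>q\<bar>"
    if "i < N" for i
  proof -
    have "\<bar>i * q\<bar> \<le> \<bar>h\<bar>" "\<bar>Suc i * q\<bar> \<le> \<bar>h\<bar>"
      using that unfolding abs_mult by (auto intro!: mult_right_mono simp flip: Nq)
    then have "\<bar>s + i * q\<bar> \<le> R" "\<bar>s + Suc i * q\<bar> \<le> R"
      using s by arith+
    then show ?thesis
      using lin[of "s + i * q" "s + Suc i * q"] \<open>\<bar>q\<bar> \<le> \<delta>\<close> by (simp add: algebra_simps)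
  qed
  have "F (s + h) - F s - (\<Sum>i<N. q * f (s + i * q))
      = (\<Sum>i<N. F (s + Suc i * q) - F (s + i * q) - q * f (s + i * q))"
    using sum_lessThan_telescope[of "\<lambda>i. F (s + i * q)" N] \<open>N > 0\<close>
    by (simp add: sum_subtractf q_def)
  also have "\<bar>\<dots>\<bar> \<le> (\<Sum>i<N. \<eta> * \<bar>q\<bar>)"
    by (rule order_trans[OF sum_abs sum_mono]) (use step in blast)
  also have "\<dots> = \<eta> * \<bar>h\<bar>" by (simp flip: Nq)
  finally show ?thesis by (simp add: q_def)
qed

lemma abs_affine_le: "\<bar>t\<bar> \<le> (M::real) \<Longrightarrow> \<bar>a * t + b\<bar> \<le> \<bar>a\<bar> * M + \<bar>b\<bar>"
  using abs_triangle_ineq[of "a * t" b] mult_left_mono[of "\<bar>t\<bar>" M "\<bar>a\<bar>"] by (simp add: abs_mult)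

lemma mult_divide_add_one_le: "0 \<le> C \<Longrightarrow> 0 \<le> e \<Longrightarrow> C * (e / (C + 1)) \<le> (e::real)"
  by (simp add: field_simps)

section \<open>Monomials and continuous functions as limits of ridge sums\<close>

lemma ridge_approximable_increment:
  fixes F f :: "real \<Rightarrow> real" and j :: nat
  assumes approx: "\<And>a b. ridge_approximable \<sigma> c d (\<lambda>t. t^j * f (a * t + b))"
    and der: "\<And>x. (F has_real_derivative f x) (at x)" and cont: "continuous_on UNIV f"
  shows "ridge_approximable \<sigma> c d (\<lambda>t. t^j * (F (a * t + b + h) - F (a * t + b)))"
proof (rule ridge_approximable_uniform_limit)
  fix e :: real assume "e > 0"
  define M where "M = \<bar>c\<bar> + \<bar>d\<bar>"
  define \<eta> where "\<eta> = e / (M^j * \<bar>h\<bar> + 1)"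
  have "M^j * \<bar>h\<bar> \<ge> 0" by (simp add: M_def)
  then have "\<eta> > 0" using \<open>e > 0\<close> by (simp add: \<eta>_def add_nonneg_pos)
  obtain \<rho> where "\<rho> > 0" and lin:
    "\<And>x y. \<bar>x\<bar> \<le> \<bar>a\<bar> * M + \<bar>b\<bar> + \<bar>h\<bar> \<Longrightarrow> \<bar>y\<bar> \<le> \<bar>a\<bar> * M + \<bar>b\<bar> + \<bar>h\<bar> \<Longrightarrow> \<bar>y - x\<bar> \<le> \<rho> \<Longrightarrow>
       \<bar>F y - F x - (y - x) * f x\<bar> \<le> \<eta> * \<bar>y - x\<bar>"
    using uniform_linearization[OF der cont \<open>\<eta> > 0\<close>] by metis
  obtain N :: nat where N: "\<bar>h\<bar> / \<rho> < N" using reals_Archimedean2 by blast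
  then have "N > 0" "\<bar>h\<bar> \<le> N * \<rho>"
    using \<open>\<rho> > 0\<close> by (auto simp: pos_divide_less_eq intro: gr0I)
  define g where "g t = (\<Sum>i<N. (h/N) * (t^j * f (a * t + (b + i * (h/N)))))" for t
  have "ridge_approximable \<sigma> c d g"
    unfolding g_def by (intro ridge_approximable_sum ridge_approximable_cmult approx)
  moreover have "\<bar>t^j * (F (a * t + b + h) - F (a * t + b)) - g t\<bar> \<le> e" if "t \<in> {c..d}" for t
  proof -
    have "\<bar>t\<bar> \<le> M" using that by (auto simp: M_def)
    then have "\<bar>a * t + b\<bar> + \<bar>h\<bar> \<le> \<bar>a\<bar> * M + \<bar>b\<bar> + \<bar>h\<bar>" by (simp add: abs_affine_le)
    from riemann_sum_increment_bound[OF lin \<open>N > 0\<close> \<open>\<bar>h\<bar> \<le> N * \<rho>\<close> this]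
    have riemann: "\<bar>F (a * t + b + h) - F (a * t + b) - (\<Sum>i<N. (h/N) * f (a * t + b + i * (h/N)))\<bar>
                     \<le> \<eta> * \<bar>h\<bar>" by (simp add: add.assoc)
    have "t^j * (F (a * t + b + h) - F (a * t + b)) - g t
        = t^j * (F (a * t + b + h) - F (a * t + b) - (\<Sum>i<N. (h/N) * f (a * t + b + i * (h/N))))"
      unfolding g_def by (simp add: sum_distrib_left algebra_simps)
    also have "\<bar>\<dots>\<bar> \<le> M^j * (\<eta> * \<bar>h\<bar>)"
      unfolding abs_mult power_abs using \<open>\<bar>t\<bar> \<le> M\<close> riemann by (intro mult_mono power_mono) auto
    also have "\<dots> \<le> e"
      using mult_divide_add_one_le[of "M^j * \<bar>h\<bar>" e] \<open>M^j * \<bar>h\<bar> \<ge> 0\<close> \<open>e > 0\<close>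
      by (simp add: \<eta>_def mult_ac)
    finally show ?thesis .
  qed
  ultimately show "\<exists>g. ridge_approximable \<sigma> c d g \<and>
            (\<forall>t\<in>{c..d}. \<bar>t^j * (F (a * t + b + h) - F (a * t + b)) - g t\<bar> \<le> e)" by blast
qed

lemma slope_difference_quotient_bound:
  fixes f f' :: "real \<Rightarrow> real" and j :: nat
  assumes lin: "\<And>x y. \<bar>x\<bar> \<le> R \<Longrightarrow> \<bar>y\<bar> \<le> R \<Longrightarrow> \<bar>y - x\<bar> \<le> \<rho> \<Longrightarrow>
                    \<bar>f y - f x - (y - x) * f' x\<bar> \<le> \<eta> * \<bar>y - x\<bar>"
    and "\<delta> > 0" "\<bar>a * t + b\<bar> + \<bar>\<delta> * t\<bar> \<le> R" "\<bar>\<delta> * t\<bar> \<le> \<rho>"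
  shows "\<bar>t^Suc j * f' (a * t + b) - (t^j * f ((a + \<delta>) * t + b) - t^j * f (a * t + b)) / \<delta>\<bar>
           \<le> \<eta> * \<bar>t\<bar>^Suc j"
proof -
  define x where "x = a * t + b"
  have "\<bar>x\<bar> \<le> R" "\<bar>x + \<delta> * t\<bar> \<le> R"
    using assms(3) abs_triangle_ineq[of x "\<delta> * t"] by (auto simp: x_def)
  then have lin_t: "\<bar>f (x + \<delta> * t) - f x - \<delta> * t * f' x\<bar> \<le> \<eta> * (\<delta> * \<bar>t\<bar>)"
    using lin[of x "x + \<delta> * t"] assms(4) \<open>\<delta> > 0\<close> by (simp add: abs_mult)
  have "t^Suc j * f' (a * t + b) - (t^j * f ((a + \<delta>) * t + b) - t^j * f (a * t + b)) / \<delta>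
      = - (t^j / \<delta>) * (f (x + \<delta> * t) - f x - \<delta> * t * f' x)"
    unfolding x_def using \<open>\<delta> > 0\<close> by (simp add: field_simps)
  also have "\<bar>\<dots>\<bar> = (\<bar>t\<bar>^j / \<delta>) * \<bar>f (x + \<delta> * t) - f x - \<delta> * t * f' x\<bar>"
    using \<open>\<delta> > 0\<close> by (simp add: abs_mult power_abs)
  also have "\<dots> \<le> (\<bar>t\<bar>^j / \<delta>) * (\<eta> * (\<delta> * \<bar>t\<bar>))"
    using lin_t \<open>\<delta> > 0\<close> by (intro mult_left_mono) auto
  also have "\<dots> = \<eta> * \<bar>t\<bar>^Suc j" using \<open>\<delta> > 0\<close> by simp
  finally show ?thesis .
qed

lemma ridge_approximable_deriv_step:
  fixes f f' :: "real \<Rightarrow> real" and j :: nat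
  assumes approx: "\<And>a b. ridge_approximable \<sigma> c d (\<lambda>t. t^j * f (a * t + b))"
    and der: "\<And>x. (f has_real_derivative f' x) (at x)" and cont: "continuous_on UNIV f'"
  shows "ridge_approximable \<sigma> c d (\<lambda>t. t^Suc j * f' (a * t + b))"
proof (rule ridge_approximable_uniform_limit)
  fix e :: real assume "e > 0"
  define M where "M = \<bar>c\<bar> + \<bar>d\<bar>"
  define \<eta> where "\<eta> = e / (M^Suc j + 1)"
  have "M \<ge> 0" "M^Suc j \<ge> 0" by (simp_all add: M_def)
  then have "\<eta> > 0" using \<open>e > 0\<close> by (simp add: \<eta>_def add_nonneg_pos)
  obtain \<rho> where "\<rho> > 0" and lin:
    "\<And>x y. \<bar>x\<bar> \<le> \<bar>a\<bar> * M + \<bar>b\<bar> + M \<Longrightarrow> \<bar>y\<bar> \<le> \<bar>a\<bar> * M + \<bar>b\<bar> + M \<Longrightarrow> \<bar>y - x\<bar> \<le> \<rho> \<Longrightarrow>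
       \<bar>f y - f x - (y - x) * f' x\<bar> \<le> \<eta> * \<bar>y - x\<bar>"
    using uniform_linearization[OF der cont \<open>\<eta> > 0\<close>] by metis
  define \<delta> where "\<delta> = min 1 (\<rho> / (M + 1))"
  have "\<delta> > 0" "\<delta> \<le> 1" using \<open>\<rho> > 0\<close> \<open>M \<ge> 0\<close> by (simp_all add: \<delta>_def)
  have "\<delta> * M \<le> \<rho>"
    using mult_divide_add_one_le[of M \<rho>] \<open>\<rho> > 0\<close> \<open>M \<ge> 0\<close> mult_right_mono[of \<delta> "\<rho> / (M + 1)" M]
    by (simp add: \<delta>_def mult_ac)
  define g where "g t = (1/\<delta>) * (t^j * f ((a + \<delta>) * t + b)) + (- 1/\<delta>) * (t^j * f (a * t + b))" for t
  have "ridge_approximable \<sigma> c d g"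
    unfolding g_def by (intro ridge_approximable_add ridge_approximable_cmult approx)
  moreover have "\<bar>t^Suc j * f' (a * t + b) - g t\<bar> \<le> e" if "t \<in> {c..d}" for t
  proof -
    have "\<bar>t\<bar> \<le> M" using that by (auto simp: M_def)
    have "\<bar>\<delta> * t\<bar> \<le> \<delta> * M" "\<bar>\<delta> * t\<bar> \<le> \<bar>t\<bar>"
      using \<open>\<bar>t\<bar> \<le> M\<close> \<open>\<delta> > 0\<close> \<open>\<delta> \<le> 1\<close>
      by (auto simp: abs_mult intro: mult_left_mono mult_left_le_one_le)
    then have "\<bar>\<delta> * t\<bar> \<le> \<rho>" "\<bar>a * t + b\<bar> + \<bar>\<delta> * t\<bar> \<le> \<bar>a\<bar> * M + \<bar>b\<bar> + M"
      using \<open>\<delta> * M \<le> \<rho>\<close> \<open>\<bar>t\<bar> \<le> M\<close> abs_affine_le[OF \<open>\<bar>t\<bar> \<le> M\<close>, of a b] by linarith+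
    from slope_difference_quotient_bound[OF lin \<open>\<delta> > 0\<close> this(2,1)]
    have "\<bar>t^Suc j * f' (a * t + b) - g t\<bar> \<le> \<eta> * \<bar>t\<bar>^Suc j"
      by (simp add: g_def diff_divide_distrib)
    also have "\<dots> \<le> \<eta> * M^Suc j"
      using \<open>\<eta> > 0\<close> \<open>\<bar>t\<bar> \<le> M\<close> by (intro mult_left_mono power_mono) auto
    also have "\<dots> \<le> e"
      using mult_divide_add_one_le[of "M^Suc j" e] \<open>M^Suc j \<ge> 0\<close> \<open>e > 0\<close>
      by (simp add: \<eta>_def mult_ac)
    finally show ?thesis .
  qed
  ultimately show "\<exists>g. ridge_approximable \<sigma> c d g \<and> (\<forall>t\<in>{c..d}. \<bar>t^Suc j * f' (a * t + b) - g t\<bar> \<le> e)"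
    by blast
qed

fun forward_diff :: "real \<Rightarrow> nat \<Rightarrow> (real \<Rightarrow> real) \<Rightarrow> real \<Rightarrow> real" where
  "forward_diff h 0 f = f"
| "forward_diff h (Suc k) f = (\<lambda>s. forward_diff h k f (s + h) - forward_diff h k f s)"

lemma continuous_on_forward_diff:
  assumes "continuous_on UNIV f"
  shows "continuous_on UNIV (forward_diff h k f)"
proof (induction k)
  case 0
  then show ?case using assms by simp
next
  case (Suc k)
  have "continuous_on UNIV (\<lambda>s. forward_diff h k f (s + h))"
    by (rule continuous_on_compose2[OF Suc.IH]) (auto intro: continuous_on_add continuous_on_id continuous_on_const)
  then show ?case using Suc.IH by (simp add: continuous_on_diff)
qed

lemma ridge_approximable_power_forward_diff:
  assumes cont: "continuous_on UNIV \<sigma>"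
  shows "ridge_approximable \<sigma> c d (\<lambda>t. t^k * forward_diff h k \<sigma> (a * t + b))"
proof (induction k arbitrary: a b)
  case 0
  show ?case using ridge_approximable_unit by simp
next
  case (Suc k)
  define f where "f = forward_diff h k \<sigma>"
  have cont_f: "continuous_on UNIV f" unfolding f_def by (rule continuous_on_forward_diff[OF cont])
  obtain F where "\<And>x. (F has_vector_derivative f x) (at x)"
    using einterval_antiderivative[of "-\<infinity>" "\<infinity>" f] cont_f
    by (auto simp: continuous_on_eq_continuous_at)
  then have der_F: "(F has_real_derivative f x) (at x)" for x
    by (simp add: has_real_derivative_iff_has_vector_derivative)
  define T where "T s = F (s + h) - F s" for s
  have "(T has_real_derivative forward_diff h (Suc k) \<sigma> x) (at x)" for x
    using DERIV_shift[of F "f (x + h)" x h] der_F[of "x + h"] der_F[of x]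
    unfolding T_def by (auto simp: f_def intro: DERIV_diff)
  moreover have "ridge_approximable \<sigma> c d (\<lambda>t. t^k * T (a * t + b))" for a b
    unfolding T_def by (rule ridge_approximable_increment[OF Suc.IH[folded f_def] der_F cont_f])
  ultimately show ?case
    by (intro ridge_approximable_deriv_step continuous_on_forward_diff cont)
qed

lemma ridge_approximable_power:
  assumes "continuous_on UNIV \<sigma>" and "forward_diff h k \<sigma> b \<noteq> 0"
  shows "ridge_approximable \<sigma> c d (\<lambda>t. t^k)"
proof -
  have "ridge_approximable \<sigma> c d (\<lambda>t. (1 / forward_diff h k \<sigma> b) * (t^k * forward_diff h k \<sigma> (0 * t + b)))"
    by (intro ridge_approximable_cmult ridge_approximable_power_forward_diff assms(1))
  then show ?thesis by (rule ridge_approximable_cong) (use assms(2) in simp)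
qed

lemma ridge_approximable_continuous:
  assumes cont: "continuous_on UNIV \<sigma>" and nonzero: "\<And>k. \<exists>h b. forward_diff h k \<sigma> b \<noteq> 0"
    and "continuous_on {c..d} g"
  shows "ridge_approximable \<sigma> c d g"
proof (rule ridge_approximable_uniform_limit)
  fix e :: real assume "e > 0"
  then obtain p where p: "real_polynomial_function p" "\<And>t. t \<in> {c..d} \<Longrightarrow> \<bar>g t - p t\<bar> < e"
    using Stone_Weierstrass_real_polynomial_function[OF compact_Icc assms(3)] by blast
  obtain a n where p_eq: "p = (\<lambda>t. \<Sum>i<Suc n. a i * t^i)"
    using p(1) real_polynomial_function_iff_sum lessThan_Suc_atMost by metis
  have "ridge_approximable \<sigma> c d (\<lambda>t. t^i)" for i
    using nonzero[of i] ridge_approximable_power[OF cont] by blast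
  then have "ridge_approximable \<sigma> c d p"
    unfolding p_eq by (intro ridge_approximable_sum ridge_approximable_cmult)
  with p(2) show "\<exists>p. ridge_approximable \<sigma> c d p \<and> (\<forall>t\<in>{c..d}. \<bar>g t - p t\<bar> \<le> e)"
    by (intro exI[of _ p]) (auto intro: less_imp_le)
qed

section \<open>Forward differences of a discriminatory function\<close>

lemma forward_diff_eq_sum_Pow:
  fixes h s :: real
  shows "forward_diff h k f s = (\<Sum>S\<in>Pow {..<k}. (-1)^(k - card S) * f (s + card S * h))"
proof (induction k arbitrary: s)
  case 0
  then show ?case by simp
next
  case (Suc k)
  have Pow_Suc: "Pow {..<Suc k} = Pow {..<k} \<union> insert k ` Pow {..<k}"
    by (simp add: lessThan_Suc Pow_insert)
  have "inj_on (insert k) (Pow {..<k})"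
    by (rule inj_onI) (metis PowD insert_ident lessThan_iff less_irrefl subsetD)
  have card_le: "card S \<le> k" and card_insert: "card (insert k S) = Suc (card S)"
    if "S \<in> Pow {..<k}" for S
    using that card_mono[of "{..<k}" S] finite_subset[of S "{..<k}"] by (auto simp: card_insert_if)
  have "(\<Sum>S\<in>Pow {..<Suc k}. (-1)^(Suc k - card S) * f (s + card S * h))
      = (\<Sum>S\<in>Pow {..<k}. (-1)^(Suc k - card S) * f (s + card S * h))
        + (\<Sum>S\<in>Pow {..<k}. (-1)^(Suc k - card (insert k S)) * f (s + card (insert k S) * h))"
    unfolding Pow_Suc using \<open>inj_on (insert k) (Pow {..<k})\<close>
    by (subst sum.union_disjoint) (auto simp: sum.reindex)
  also have "\<dots> = - forward_diff h k f s + forward_diff h k f (s + h)"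
    unfolding Suc.IH sum_negf[symmetric]
    by (intro arg_cong2[of _ _ _ _ "(+)"] sum.cong)
       (auto simp: card_insert Suc_diff_le[OF card_le] algebra_simps)
  finally show ?case by simp
qed

lemma sum_neg_one_power_split:
  fixes g :: "'a \<Rightarrow> real"
  assumes "finite A"
  shows "(\<Sum>x\<in>A. (-1)^(n x) * g x) = sum g {x\<in>A. even (n x)} - sum g {x\<in>A. odd (n x)}"
proof -
  have "(\<Sum>x\<in>A. (-1)^(n x) * g x) = (\<Sum>x\<in>A. if even (n x) then g x else - g x)"
    by (rule sum.cong) auto
  also have "\<dots> = sum g (A \<inter> {x. even (n x)}) + sum (\<lambda>x. - g x) (A \<inter> - {x. even (n x)})"
    by (rule sum.If_cases[OF assms])
  finally show ?thesis by (simp add: sum_negf Int_def)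
qed

definition point_masses :: "'i set \<Rightarrow> ('i \<Rightarrow> real^'n::finite) \<Rightarrow> (real^'n) measure" where
  "point_masses I p = distr (count_space I) (restrict_space borel unit_cube) p"

lemma sets_point_masses [simp]:
  "sets (point_masses I p) = sets (restrict_space borel unit_cube)"
  by (simp add: point_masses_def)

lemma measurable_point_masses:
  "p ` I \<subseteq> unit_cube \<Longrightarrow> p \<in> count_space I \<rightarrow>\<^sub>M restrict_space borel unit_cube"
  by (auto simp: space_restrict_space)

lemma finite_measure_point_masses:
  "finite I \<Longrightarrow> p ` I \<subseteq> unit_cube \<Longrightarrow> finite_measure (point_masses I p)"
  unfolding point_masses_def
  by (rule finite_measure.finite_measure_distr[OF finite_measure_count_space measurable_point_masses])

lemma integral_point_masses:
  fixes g :: "real^'n::finite \<Rightarrow> real"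
  assumes "finite I" "p ` I \<subseteq> unit_cube" "continuous_on UNIV g"
  shows "(\<integral>x. g x \<partial>point_masses I p) = (\<Sum>i\<in>I. g (p i))"
proof -
  have "g \<in> borel_measurable (restrict_space borel unit_cube)"
    by (rule measurable_restrict_space1[OF borel_measurable_continuous_onI[OF assms(3)]])
  then have "(\<integral>x. g x \<partial>point_masses I p) = (\<integral>i. g (p i) \<partial>count_space I)"
    unfolding point_masses_def
    using integral_distr[OF measurable_point_masses[OF assms(2)] \<open>g \<in> _\<close>] by simp
  also have "\<dots> = (\<Sum>i\<in>I. g (p i))" by (rule lebesgue_integral_count_space_finite[OF assms(1)])
  finally show ?thesis .
qed

lemma singleton_sets_unit_cube:
  "x \<in> unit_cube \<Longrightarrow> {x} \<in> sets (restrict_space borel unit_cube)"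
  unfolding unit_cube_def by (simp add: sets_restrict_space_iff)

lemma measure_point_masses_singleton:
  assumes "finite I" "p ` I \<subseteq> unit_cube" "x \<in> unit_cube"
  shows "measure (point_masses I p) {x} = card {i\<in>I. p i = x}"
proof -
  from singleton_sets_unit_cube[OF assms(3)] have "measure (point_masses I p) {x} = measure (count_space I) (p -` {x} \<inter> I)"
    unfolding point_masses_def by (simp add: measure_distr[OF measurable_point_masses[OF assms(2)]])
  also have "p -` {x} \<inter> I = {i\<in>I. p i = x}" by auto
  finally show ?thesis using assms(1) by simp
qed

definition subset_point :: "'n::finite \<Rightarrow> nat \<Rightarrow> nat set \<Rightarrow> real^'n" where
  "subset_point i k S = (card S / k) *\<^sub>R axis i 1"

lemma subset_point_in_unit_cube:
  assumes "S \<subseteq> {..<k}"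
  shows "subset_point i k S \<in> unit_cube"
proof -
  have "card S \<le> k" using assms card_mono[of "{..<k}" S] by auto
  then have "card S / k \<le> 1" by (cases "k = 0") auto
  then show ?thesis unfolding unit_cube_def mem_box_cart(2) by (auto simp: subset_point_def axis_def)
qed

lemma subset_point_eq_full_iff:
  assumes "S \<subseteq> {..<k}"
  shows "subset_point i k S = subset_point i k {..<k} \<longleftrightarrow> S = {..<k}"
proof
  assume "subset_point i k S = subset_point i k {..<k}"
  then have "subset_point i k S $ i = subset_point i k {..<k} $ i" by simp
  then have "card S = k \<or> k = 0" by (auto simp: subset_point_def)
  then show "S = {..<k}" using assms card_subset_eq[of "{..<k}" S] by auto
qed simp

lemma ridge_integral_difference_eq_forward_diff:
  fixes w :: "real^'n::finite"
  assumes cont: "continuous_on UNIV \<sigma>"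
  shows "(\<integral>x. \<sigma> (w \<bullet> x + \<theta>) \<partial>point_masses {S\<in>Pow {..<k}. even (k - card S)} (subset_point i k))
       - (\<integral>x. \<sigma> (w \<bullet> x + \<theta>) \<partial>point_masses {S\<in>Pow {..<k}. odd (k - card S)} (subset_point i k))
       = forward_diff (w $ i / k) k \<sigma> \<theta>"
proof -
  have ridge: "continuous_on UNIV (\<lambda>x::real^'n. \<sigma> (w \<bullet> x + \<theta>))"
    by (rule continuous_on_compose2[OF cont]) (simp_all add: continuous_on_add continuous_on_inner)
  have sums: "(\<integral>x. \<sigma> (w \<bullet> x + \<theta>) \<partial>point_masses I (subset_point i k))
      = (\<Sum>S\<in>I. \<sigma> (\<theta> + card S * (w $ i / k)))" if "I \<subseteq> Pow {..<k}" for I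
  proof -
    have "finite I" using that by (rule finite_subset) simp
    moreover have "subset_point i k ` I \<subseteq> unit_cube"
      using that by (auto intro!: subset_point_in_unit_cube)
    ultimately have "(\<integral>x. \<sigma> (w \<bullet> x + \<theta>) \<partial>point_masses I (subset_point i k))
        = (\<Sum>S\<in>I. \<sigma> (w \<bullet> subset_point i k S + \<theta>))"
      by (rule integral_point_masses[OF _ _ ridge])
    then show ?thesis by (simp add: subset_point_def inner_axis add.commute)
  qed
  show ?thesis
    unfolding forward_diff_eq_sum_Pow sum_neg_one_power_split[OF finite_Pow_iff[THEN iffD2, OF finite_lessThan]]
    by (subst (1 2) sums) auto
qed

lemma discriminatory_forward_diff_nonzero:
  assumes cont: "continuous_on UNIV \<sigma>" and disc: "discriminatory \<sigma> TYPE('n::finite)"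
  shows "\<exists>h b. forward_diff h k \<sigma> b \<noteq> 0"
proof (rule ccontr)
  assume "\<not> ?thesis"
  then have vanish: "forward_diff h k \<sigma> b = 0" for h b by blast
  define p where "p = subset_point (undefined :: 'n) k" \<comment> \<open>any coordinate direction will do\<close>
  define I1 where "I1 = {S\<in>Pow {..<k}. even (k - card S)}"
  define I2 where "I2 = {S\<in>Pow {..<k}. odd (k - card S)}"
  have fin: "finite I1" "finite I2" by (simp_all add: I1_def I2_def)
  have cube: "p ` I1 \<subseteq> unit_cube" "p ` I2 \<subseteq> unit_cube"
    using subset_point_in_unit_cube by (auto simp: I1_def I2_def p_def)
  have "(\<integral>x. \<sigma> (w \<bullet> x + \<theta>) \<partial>point_masses I1 p) = (\<integral>x. \<sigma> (w \<bullet> x + \<theta>) \<partial>point_masses I2 p)"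
    for w :: "real^'n" and \<theta>
    using ridge_integral_difference_eq_forward_diff[OF cont, where w=w and \<theta>=\<theta> and k=k] vanish
    by (simp add: I1_def I2_def p_def)
  then have same_measure: "measure (point_masses I1 p) A = measure (point_masses I2 p) A"
    if "A \<in> sets (restrict_space borel unit_cube)" for A
    using disc fin cube that unfolding discriminatory_def by (simp add: finite_measure_point_masses)
  have "p S = p {..<k} \<longleftrightarrow> S = {..<k}" if "S \<in> Pow {..<k}" for S
    using subset_point_eq_full_iff that by (simp add: p_def)
  then have hits: "{S\<in>I1. p S = p {..<k}} = {{..<k}}" "{S\<in>I2. p S = p {..<k}} = {}"
    by (auto simp: I1_def I2_def)
  have top: "p {..<k} \<in> unit_cube" by (simp add: p_def subset_point_in_unit_cube)
  have "measure (point_masses I1 p) {p {..<k}} = 1" "measure (point_masses I2 p) {p {..<k}} = 0"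
    unfolding measure_point_masses_singleton[OF fin(1) cube(1) top]
      measure_point_masses_singleton[OF fin(2) cube(2) top] hits by simp_all
  then show False using same_measure[OF singleton_sets_unit_cube[OF top]] by simp
qed

section \<open>Ridge networks on the cube\<close>

definition exp_sum :: "(real \<times> (real^'n)) list \<Rightarrow> real^'n \<Rightarrow> real" where
  "exp_sum L x = (\<Sum>(c, w)\<leftarrow>L. c * exp (w \<bullet> x))"

definition ridge_net :: "(real \<Rightarrow> real) \<Rightarrow> (real \<times> (real^'n) \<times> real) list \<Rightarrow> real^'n \<Rightarrow> real" where
  "ridge_net \<sigma> L x = (\<Sum>(\<alpha>, w, \<theta>)\<leftarrow>L. \<alpha> * \<sigma> (w \<bullet> x + \<theta>))"

lemma exp_sum_Cons: "exp_sum ((c, w) # L) x = c * exp (w \<bullet> x) + exp_sum L x"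
  by (simp add: exp_sum_def)

lemma exp_sum_append: "exp_sum (L1 @ L2) x = exp_sum L1 x + exp_sum L2 x"
  by (simp add: exp_sum_def)

lemma ridge_net_append: "ridge_net \<sigma> (L1 @ L2) x = ridge_net \<sigma> L1 x + ridge_net \<sigma> L2 x"
  by (simp add: ridge_net_def)

lemma exp_sum_mult:
  "exp_sum (concat (map (\<lambda>(a, v). map (\<lambda>(b, w). (a * b, v + w)) L2) L1)) x = exp_sum L1 x * exp_sum L2 x"
proof (induction L1)
  case Nil
  then show ?case by (simp add: exp_sum_def)
next
  case (Cons p L1)
  have "exp_sum (map (\<lambda>(b, w). (a * b, v + w)) L2) x = a * exp (v \<bullet> x) * exp_sum L2 x" for a v
    by (induction L2) (auto simp: exp_sum_def exp_add algebra_simps)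
  with Cons show ?case by (cases p) (simp add: exp_sum_append, simp add: exp_sum_def algebra_simps)
qed

lemma continuous_on_exp_sum: "continuous_on S (exp_sum L)"
proof (induction L)
  case Nil
  then show ?case by (simp add: exp_sum_def)
next
  case (Cons p L)
  obtain c w where "p = (c, w)" by fastforce
  then have "exp_sum (p # L) = (\<lambda>x. c * exp (w \<bullet> x) + exp_sum L x)"
    by (simp add: fun_eq_iff exp_sum_Cons)
  then show ?case
    by (simp only:) (intro continuous_on_add continuous_on_mult_left continuous_on_exp
        continuous_on_inner continuous_on_const continuous_on_id Cons.IH)
qed

lemma function_ring_on_exp_sums: "function_ring_on (range exp_sum) (unit_cube :: (real^'n::finite) set)"
proof unfold_locales
  show "compact unit_cube" by (simp add: unit_cube_def)
next
  fix f g :: "real^'n \<Rightarrow> real" assume "f \<in> range exp_sum" "g \<in> range exp_sum"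
  then obtain L1 L2 where "f = exp_sum L1" "g = exp_sum L2" by blast
  then show "(\<lambda>x. f x + g x) \<in> range exp_sum" "(\<lambda>x. f x * g x) \<in> range exp_sum"
    by (auto simp flip: exp_sum_append exp_sum_mult)
next
  fix c :: real
  have "(\<lambda>_. c) = exp_sum [(c, 0)]" by (simp add: exp_sum_def fun_eq_iff)
  then show "(\<lambda>_. c) \<in> range exp_sum" by blast
next
  fix x y :: "real^'n" assume "x \<noteq> y"
  then have "(x - y) \<bullet> x \<noteq> (x - y) \<bullet> y"
    by (metis inner_diff_right inner_eq_zero_iff right_minus_eq)
  then have "exp_sum [(1, x - y)] x \<noteq> exp_sum [(1, x - y)] y" by (simp add: exp_sum_def)
  then show "\<exists>f\<in>range exp_sum. f x \<noteq> f y" by blast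
qed (use continuous_on_exp_sum in auto)

lemma ridge_net_embed_ridge_sum:
  "ridge_net \<sigma> (map (\<lambda>(\<alpha>, a, b). (\<alpha>, a *\<^sub>R w, b)) L) x = ridge_sum \<sigma> L (w \<bullet> x)"
  by (induction L) (auto simp: ridge_net_def ridge_sum_def)

lemma ridge_net_approx_exp:
  fixes w :: "real^'n::finite"
  assumes exp_approx: "\<And>B. ridge_approximable \<sigma> (-B) B exp" and "e > 0"
  shows "\<exists>L. \<forall>x\<in>unit_cube. \<bar>c * exp (w \<bullet> x) - ridge_net \<sigma> L x\<bar> < e"
proof -
  obtain K where K: "\<And>x::real^'n. x \<in> unit_cube \<Longrightarrow> norm x \<le> K"
    using bounded_cbox unfolding unit_cube_def bounded_iff by blast
  have "w \<bullet> x \<in> {- (norm w * K)..norm w * K}" if "x \<in> unit_cube" for x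
    using Cauchy_Schwarz_ineq2[of w x] mult_left_mono[OF K[OF that], of "norm w"] by (simp add: abs_le_iff)
  moreover obtain L where "\<forall>s\<in>{- (norm w * K)..norm w * K}. \<bar>c * exp s - ridge_sum \<sigma> L s\<bar> < e"
    using ridge_approximable_cmult[OF exp_approx] \<open>e > 0\<close> unfolding ridge_approximable_def by blast
  ultimately have "\<forall>x\<in>unit_cube. \<bar>c * exp (w \<bullet> x) - ridge_sum \<sigma> L (w \<bullet> x)\<bar> < e"
    by blast
  then show ?thesis by (metis ridge_net_embed_ridge_sum)
qed

lemma ridge_net_approx_exp_sum:
  fixes L :: "(real \<times> (real^'n::finite)) list"
  assumes exp_approx: "\<And>B. ridge_approximable \<sigma> (-B) B exp"
  shows "e > 0 \<Longrightarrow> \<exists>L'. \<forall>x\<in>unit_cube. \<bar>exp_sum L x - ridge_net \<sigma> L' x\<bar> < e"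
proof (induction L arbitrary: e)
  case Nil
  show ?case by (intro exI[of _ "[]"]) (simp add: exp_sum_def ridge_net_def Nil)
next
  case (Cons p L)
  obtain c w where p: "p = (c, w)" by fastforce
  obtain L1 where L1: "\<forall>x\<in>unit_cube. \<bar>c * exp (w \<bullet> x) - ridge_net \<sigma> L1 x\<bar> < e/2"
    using ridge_net_approx_exp[OF exp_approx, where e="e/2" and c=c and w=w] Cons.prems by auto
  obtain L2 where L2: "\<forall>x\<in>unit_cube. \<bar>exp_sum L x - ridge_net \<sigma> L2 x\<bar> < e/2"
    using Cons.IH[of "e/2"] Cons.prems by auto
  have "\<bar>exp_sum (p # L) x - ridge_net \<sigma> (L1 @ L2) x\<bar> < e" if "x \<in> unit_cube" for x
    using L1[rule_format, OF that] L2[rule_format, OF that]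
    unfolding p exp_sum_Cons ridge_net_append by arith
  then show ?case by blast
qed

lemma ridge_net_dense:
  fixes f :: "real^'n::finite \<Rightarrow> real"
  assumes "\<And>B. ridge_approximable \<sigma> (-B) B exp" and "continuous_on unit_cube f" and "e > 0"
  shows "\<exists>L. \<forall>x\<in>unit_cube. \<bar>f x - ridge_net \<sigma> L x\<bar> < e"
proof -
  interpret function_ring_on "range exp_sum" "unit_cube :: (real^'n) set"
    by (rule function_ring_on_exp_sums)
  obtain L where L: "\<forall>x\<in>unit_cube. \<bar>f x - exp_sum L x\<bar> < e/2"
    using Stone_Weierstrass_basic[OF assms(2), of "e/2"] \<open>e > 0\<close> by auto
  obtain L' where L': "\<forall>x\<in>unit_cube. \<bar>exp_sum L x - ridge_net \<sigma> L' x\<bar> < e/2"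
    using ridge_net_approx_exp_sum[OF assms(1), of "e/2"] \<open>e > 0\<close> by auto
  have "\<bar>f x - ridge_net \<sigma> L' x\<bar> < e" if "x \<in> unit_cube" for x
    using L[rule_format, OF that] L'[rule_format, OF that] by arith
  then show ?thesis by blast
qed

section \<open>Circulant blocks\<close>

definition order_rank :: "'n::{finite,linorder} \<Rightarrow> nat" where
  "order_rank i = card {j. j < i}"

lemma idx_pos_eq_order_rank: "idx_pos i = int (order_rank i)"
  by (simp add: idx_pos_def order_rank_def)

lemma strict_mono_order_rank: "strict_mono (order_rank :: 'n::{finite,linorder} \<Rightarrow> nat)"
  unfolding strict_mono_def order_rank_def by (auto intro!: psubset_card_mono)

lemma bij_betw_order_rank: "bij_betw (order_rank :: 'n::{finite,linorder} \<Rightarrow> nat) UNIV {..<CARD('n)}"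
proof -
  have "order_rank i < CARD('n)" for i :: 'n
    unfolding order_rank_def by (rule psubset_card_mono) auto
  moreover have "inj (order_rank :: 'n \<Rightarrow> nat)" by (rule strict_mono_imp_inj_on[OF strict_mono_order_rank])
  moreover have "card (range (order_rank :: 'n \<Rightarrow> nat)) = card {..<CARD('n)}"
    using card_image[OF \<open>inj order_rank\<close>] by simp
  ultimately show ?thesis
    unfolding bij_betw_def by (metis card_subset_eq finite_lessThan image_subsetI lessThan_iff)
qed

lemma order_rank_Min: "order_rank (Min UNIV :: 'n::{finite,linorder}) = 0"
proof -
  have "{j. j < (Min UNIV :: 'n)} = {}" by (auto simp: not_less)
  then show ?thesis by (simp add: order_rank_def)
qed

lemma circulant_imp_toeplitz: "circulant M \<Longrightarrow> toeplitz M"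
  unfolding circulant_def toeplitz_def by metis

definition circulant_of_column :: "real^('n::{finite,linorder}) \<Rightarrow> real^('n::{finite,linorder})^('n::{finite,linorder})" where
  "circulant_of_column v = (\<chi> r c. v $ inv order_rank (nat ((idx_pos r - idx_pos c) mod CARD('n))))"

lemma circulant_circulant_of_column: "circulant (circulant_of_column v)"
  by (simp add: circulant_def circulant_of_column_def)

lemma column_Min_circulant_of_column: "column (Min UNIV) (circulant_of_column v) = v"
proof -
  have "circulant_of_column v $ r $ Min UNIV = v $ r" for r
  proof -
    have "order_rank r < CARD('a)" using bij_betw_order_rank by (auto simp: bij_betw_def)
    then have "nat ((idx_pos r - idx_pos (Min UNIV :: 'a)) mod CARD('a)) = order_rank r"
      by (simp add: idx_pos_eq_order_rank order_rank_Min)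
    then show ?thesis
      by (simp add: circulant_of_column_def bij_betw_imp_inj_on[OF bij_betw_order_rank])
  qed
  then show ?thesis by (simp add: column_def vec_eq_iff)
qed

lemma ridge_net_as_circulant_block_net:
  fixes L :: "(real \<times> (real^'n::{finite,linorder}) \<times> real) list"
  obtains k W \<alpha> \<theta> where "k > 0" "\<forall>i<k. circulant (W i)"
    "\<And>x. block_net \<sigma> k W \<alpha> \<theta> x = ridge_net \<sigma> L x"
proof
  define c0 :: "'n::{finite,linorder}" where "c0 = Min UNIV"
  define W where "W i = circulant_of_column (fst (snd (L ! i)))" for i
  define \<alpha> where "\<alpha> i c = (if c = c0 \<and> i < length L then fst (L ! i) else 0)" for i c
  define \<theta> where "\<theta> i (c :: 'n) = snd (snd (L ! i))" for i c
  show "Suc (length L) > 0" by simp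
  show "\<forall>i<Suc (length L). circulant (W i)" by (simp add: W_def circulant_circulant_of_column)
  fix x :: "real^'n::{finite,linorder}"
  have "(\<Sum>c\<in>UNIV. \<alpha> i c * \<sigma> (column c (W i) \<bullet> x + \<theta> i c))
      = (if i < length L then fst (L ! i) * \<sigma> (fst (snd (L ! i)) \<bullet> x + snd (snd (L ! i))) else 0)" for i
  proof -
    have "(\<Sum>c\<in>UNIV. \<alpha> i c * \<sigma> (column c (W i) \<bullet> x + \<theta> i c))
        = (\<Sum>c\<in>UNIV. if c = c0 then \<alpha> i c0 * \<sigma> (column c0 (W i) \<bullet> x + \<theta> i c0) else 0)"
      by (rule sum.cong) (auto simp: \<alpha>_def)
    then show ?thesis by (simp add: \<alpha>_def W_def \<theta>_def c0_def column_Min_circulant_of_column)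
  qed
  then have "block_net \<sigma> (Suc (length L)) W \<alpha> \<theta> x
      = (\<Sum>i<length L. fst (L ! i) * \<sigma> (fst (snd (L ! i)) \<bullet> x + snd (snd (L ! i))))"
    by (simp add: block_net_def)
  also have "\<dots> = ridge_net \<sigma> L x"
    by (simp add: ridge_net_def sum_list_sum_nth atLeast0LessThan case_prod_beta)
  finally show "block_net \<sigma> (Suc (length L)) W \<alpha> \<theta> x = ridge_net \<sigma> L x" .
qed

lemma circulant_block_net_approx:
  fixes \<sigma> :: "real \<Rightarrow> real" and f :: "real^('n::{finite,linorder}) \<Rightarrow> real"
  assumes cont: "continuous_on UNIV \<sigma>" and disc: "discriminatory \<sigma> TYPE('n)"
    and "continuous_on unit_cube f" and "\<epsilon> > 0"
  obtains k W \<alpha> \<theta> where "k > 0" "\<forall>i<k. circulant (W i)"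
    "\<forall>x\<in>unit_cube. \<bar>block_net \<sigma> k W \<alpha> \<theta> x - f x\<bar> < \<epsilon>"
proof -
  have "ridge_approximable \<sigma> (-B) B exp" for B
    using ridge_approximable_continuous[OF cont discriminatory_forward_diff_nonzero[OF cont disc]]
      continuous_on_exp[OF continuous_on_id] by blast
  then obtain L where L: "\<forall>x\<in>unit_cube. \<bar>f x - ridge_net \<sigma> L x\<bar> < \<epsilon>"
    using ridge_net_dense assms(3,4) by blast
  obtain k W \<alpha> \<theta> where "k > 0" "\<forall>i<k. circulant (W i)"
    "\<And>x. block_net \<sigma> k W \<alpha> \<theta> x = ridge_net \<sigma> L x"
    using ridge_net_as_circulant_block_net by blast
  with L show ?thesis using that[of k W \<alpha> \<theta>] by (simp add: abs_minus_commute)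
qed

theorem corollary1:
  fixes \<sigma> :: "real \<Rightarrow> real"
  assumes "continuous_on UNIV \<sigma>"
    and "discriminatory \<sigma> TYPE('n::{finite,linorder})"
  shows "(\<forall>(f::real^('n::{finite,linorder}) \<Rightarrow> real) (\<epsilon>::real). continuous_on unit_cube f \<and> \<epsilon> > 0 \<longrightarrow>
           (\<exists>k W \<alpha> \<theta>. k > 0 \<and> (\<forall>i<k. toeplitz (W i)) \<and>
              (\<forall>x\<in>unit_cube. \<bar>block_net \<sigma> k W \<alpha> \<theta> x - f x\<bar> < \<epsilon>)))
       \<and> (\<forall>(f::real^('n::{finite,linorder}) \<Rightarrow> real) (\<epsilon>::real). continuous_on unit_cube f \<and> \<epsilon> > 0 \<longrightarrow>
           (\<exists>k W \<alpha> \<theta>. k > 0 \<and> (\<forall>i<k. circulant (W i)) \<and>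
              (\<forall>x\<in>unit_cube. \<bar>block_net \<sigma> k W \<alpha> \<theta> x - f x\<bar> < \<epsilon>)))"
  using circulant_block_net_approx[OF assms] circulant_imp_toeplitz by metis

end
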